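(* Let $a\in\mathbb{R}$ and $\theta\in(0,\pi)$, with $\theta\neq\cos^{-1}\!\left(-\frac{1}{2\sqrt a}\right)$ whenever $a>1/4$. Let \[ \zeta=\zeta(\theta)=\frac{(2a-1)\cos\theta+\sqrt{(1-4a)\cos^2\theta+a}}{1-4a\cos^2\theta},\qquad z(\theta)=\frac{a\zeta}{(2\cos\theta+\zeta)(1+2\zeta\cos\theta)}. \] Then the zeros in $t$ of $1+t+at^2+z(\theta)t^3$ are \[ t_0=-\frac{e^{2i\theta}+\zeta e^{i\theta}+\zeta e^{3i\theta}}{\zeta e^{3i\theta}},\qquad t_1=t_0e^{2i\theta},\qquad t_2=\zeta e^{i\theta}t_0. \]
   Context: The square root denotes the principal square root (it may be non-real if the radicand is negative); the statement concerns those $\theta$ for which $\zeta(\theta)$ and $z(\theta)$ are defined (nonzero denominators). *)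

theory Defs
  imports Complex_Main
begin

definition zeta :: "real \<Rightarrow> real \<Rightarrow> complex" where
  "zeta a \<theta> =
     (complex_of_real ((2*a - 1) * cos \<theta>) + csqrt (complex_of_real ((1 - 4*a) * (cos \<theta>)^2 + a)))
     / complex_of_real (1 - 4*a*(cos \<theta>)^2)"

definition zfun :: "real \<Rightarrow> real \<Rightarrow> complex" where
  "zfun a \<theta> =
     (complex_of_real a * zeta a \<theta>) /
     ((complex_of_real (2 * cos \<theta>) + zeta a \<theta>) * (1 + 2 * zeta a \<theta> * complex_of_real (cos \<theta>)))"

end

theory Submission
  imports Defs
begin

text \<open>
  Write \<open>w = e\<^sup>i\<^sup>\<theta>\<close>, \<open>c = cos \<theta>\<close> (so \<open>w\<^sup>2 + 1 = 2 c w\<close>), \<open>\<zeta> = zeta a \<theta>\<close> and \<open>u = 1 + 2 c \<zeta>\<close>.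
  Since \<zeta> is a root of \<open>(1 - 4 a c\<^sup>2) \<zeta>\<^sup>2 - 2 (2a - 1) c \<zeta> - a\<close>, it satisfies
  \<open>a u\<^sup>2 = \<zeta> (\<zeta> + 2c)\<close>, and then the definition of \<open>z\<close> gives \<open>z u\<^sup>3 = \<zeta>\<^sup>2\<close>.
  Moreover \<open>t\<^sub>0 = -u/(\<zeta> w)\<close>, so the claimed roots are \<open>-u/(\<zeta> w)\<close>, \<open>-u w/\<zeta>\<close> and \<open>-u\<close>,
  and the two relations are exactly Vieta's formulas for them.
\<close>

lemma exp_ii_squared_plus_one:
  "exp (\<i> * complex_of_real x) ^ 2 + 1 = 2 * complex_of_real (cos x) * exp (\<i> * complex_of_real x)"
proof -
  have "exp (\<i> * complex_of_real x) = Complex (cos x) (sin x)"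
    by (simp add: exp_eq_polar cis.ctr mult.commute)
  moreover have "cos x * cos x = 1 - sin x * sin x"
    using sin_cos_squared_add3[of x] by linarith
  ultimately show ?thesis
    by (simp add: complex_eq_iff power2_eq_square cos_double sin_double)
qed

lemma quadratic_root_relation:
  fixes a c s Z :: "'a::idom"
  assumes A: "1 - 4*a*c^2 \<noteq> 0"
    and root: "(1 - 4*a*c^2) * Z = (2*a - 1)*c + s"
    and s: "s^2 = (1 - 4*a)*c^2 + a"
  shows "a * (1 + 2*c*Z)^2 = Z * (Z + 2*c)"
proof -
  have "(1 - 4*a*c^2) * (Z * (Z + 2*c) - a * (1 + 2*c*Z)^2)
          = ((1 - 4*a*c^2) * Z - (2*a - 1)*c)^2 - s^2"
    unfolding s by (simp add: algebra_simps power2_eq_square)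
  also have "\<dots> = 0"
    using root by simp
  finally show ?thesis
    using A by simp
qed

lemma zeta_quadratic_relation:
  assumes "1 - 4*a*(cos \<theta>)^2 \<noteq> 0"
  shows "complex_of_real a * (1 + 2 * complex_of_real (cos \<theta>) * zeta a \<theta>)^2
           = zeta a \<theta> * (zeta a \<theta> + 2 * complex_of_real (cos \<theta>))"
proof (rule quadratic_root_relation)
  let ?s = "csqrt (complex_of_real ((1 - 4*a) * (cos \<theta>)^2 + a))"
  have A: "complex_of_real (1 - 4*a*(cos \<theta>)^2) \<noteq> 0"
    using assms by (metis of_real_eq_0_iff)
  then show "1 - 4 * complex_of_real a * (complex_of_real (cos \<theta>))^2 \<noteq> 0"
    by simp
  show "(1 - 4 * complex_of_real a * (complex_of_real (cos \<theta>))^2) * zeta a \<theta>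
          = (2 * complex_of_real a - 1) * complex_of_real (cos \<theta>) + ?s"
    using A unfolding zeta_def by simp
  show "?s^2 = (1 - 4 * complex_of_real a) * (complex_of_real (cos \<theta>))^2 + complex_of_real a"
    by simp
qed

lemma zfun_mult_denominators:
  assumes "(complex_of_real (2 * cos \<theta>) + zeta a \<theta>) * (1 + 2 * zeta a \<theta> * complex_of_real (cos \<theta>)) \<noteq> 0"
  shows "zfun a \<theta> * (1 + 2 * complex_of_real (cos \<theta>) * zeta a \<theta>) * (zeta a \<theta> + 2 * complex_of_real (cos \<theta>))
           = complex_of_real a * zeta a \<theta>"
proof -
  have "zfun a \<theta> * ((complex_of_real (2 * cos \<theta>) + zeta a \<theta>) * (1 + 2 * zeta a \<theta> * complex_of_real (cos \<theta>)))
          = complex_of_real a * zeta a \<theta>"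
    using assms unfolding zfun_def by simp
  then show ?thesis
    by (simp add: ac_simps)
qed

lemma first_root_eq:
  fixes Z :: complex
  shows "- (exp (2 * \<i> * complex_of_real x) + Z * exp (\<i> * complex_of_real x) + Z * exp (3 * \<i> * complex_of_real x))
           / (Z * exp (3 * \<i> * complex_of_real x))
         = - ((1 + 2 * complex_of_real (cos x) * Z) / (Z * exp (\<i> * complex_of_real x)))"
proof -
  define w where "w = exp (\<i> * complex_of_real x)"
  have powers: "exp (of_nat n * \<i> * complex_of_real x) = w^n" for n
    unfolding w_def by (metis exp_of_nat_mult mult.assoc)
  have "w^2 + Z*w + Z*w^3 = w^2 + Z*w*(w^2 + 1)"
    by (simp add: algebra_simps power2_eq_square power3_eq_cube)
  also have "\<dots> = w^2 * (1 + 2 * complex_of_real (cos x) * Z)"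
    unfolding w_def exp_ii_squared_plus_one by (simp add: algebra_simps power2_eq_square)
  finally have "w^2 + Z*w + Z*w^3 = w^2 * (1 + 2 * complex_of_real (cos x) * Z)" .
  moreover have "w \<noteq> 0"
    unfolding w_def by simp
  ultimately show ?thesis
    unfolding powers[of 2, simplified] powers[of 3, simplified] w_def[symmetric]
    by (simp add: power2_eq_square power3_eq_cube)
qed

lemma cube_relation:
  fixes a c z Z :: "'a::field"
  assumes "Z + 2*c \<noteq> 0"
    and quadratic: "a * (1 + 2*c*Z)^2 = Z * (Z + 2*c)"
    and leading: "z * (1 + 2*c*Z) * (Z + 2*c) = a * Z"
  shows "z * (1 + 2*c*Z)^3 = Z^2"
proof -
  have "z * (1 + 2*c*Z)^3 * (Z + 2*c) = z * (1 + 2*c*Z) * (Z + 2*c) * (1 + 2*c*Z)^2"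
    by (simp add: power2_eq_square power3_eq_cube ac_simps)
  also have "\<dots> = Z * (a * (1 + 2*c*Z)^2)"
    unfolding leading by (simp add: ac_simps)
  also have "\<dots> = Z^2 * (Z + 2*c)"
    unfolding quadratic by (simp add: power2_eq_square)
  finally show ?thesis
    using assms(1) by simp
qed

lemma cubic_factorization:
  fixes a c w z Z t :: "'a::field"
  assumes w: "w \<noteq> 0" and Z: "Z \<noteq> 0" and "Z + 2*c \<noteq> 0"
    and circle: "w^2 + 1 = 2*c*w"
    and quadratic: "a * (1 + 2*c*Z)^2 = Z * (Z + 2*c)"
    and leading: "z * (1 + 2*c*Z) * (Z + 2*c) = a * Z"
  defines "r \<equiv> - ((1 + 2*c*Z) / (Z*w))"
  shows "1 + t + a*t^2 + z*t^3 = z * (t - r) * (t - r*w^2) * (t - Z*w*r)"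
proof -
  have cube: "z * (1 + 2*c*Z)^3 = Z^2"
    using cube_relation[OF \<open>Z + 2*c \<noteq> 0\<close> quadratic leading] .
  have rw: "r * w = - ((1 + 2*c*Z) / Z)"
    unfolding r_def using w Z by (simp add: field_simps)
  have "z * (r + r*w^2 + Z*w*r) = z * (r * (w^2 + 1) + Z*w*r)"
    by (simp add: algebra_simps)
  also have "\<dots> = z * (r * w) * (Z + 2*c)"
    unfolding circle by (simp add: algebra_simps)
  also have "\<dots> = - (z * (1 + 2*c*Z) * (Z + 2*c) / Z)"
    unfolding rw by simp
  finally have sum: "z * (r + r*w^2 + Z*w*r) = - a"
    unfolding leading using Z by simp
  have "z * (r * (r*w^2) + r * (Z*w*r) + r*w^2 * (Z*w*r)) = z * (r * w)^2 * (1 + Z * (w^2 + 1) / w)"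
    using w by (simp add: field_simps power2_eq_square)
  also have "\<dots> = z * (r * w)^2 * (1 + 2*c*Z)"
    unfolding circle using w by (simp add: ac_simps)
  also have "\<dots> = z * (1 + 2*c*Z)^3 / Z^2"
    unfolding rw power2_minus by (simp add: power_divide power2_eq_square power3_eq_cube)
  finally have pairs: "z * (r * (r*w^2) + r * (Z*w*r) + r*w^2 * (Z*w*r)) = 1"
    unfolding cube using Z by simp
  have "z * (r * (r*w^2) * (Z*w*r)) = z * (r * w)^3 * Z"
    by (simp add: algebra_simps power2_eq_square power3_eq_cube)
  also have "\<dots> = - (z * (1 + 2*c*Z)^3) / Z^2"
    unfolding rw using Z by (simp add: power2_eq_square power3_eq_cube)
  finally have product: "z * (r * (r*w^2) * (Z*w*r)) = -1"
    unfolding cube using Z by simp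
  have "z * (t - r) * (t - r*w^2) * (t - Z*w*r)
          = z*t^3 - z * (r + r*w^2 + Z*w*r) * t^2
            + z * (r * (r*w^2) + r * (Z*w*r) + r*w^2 * (Z*w*r)) * t
            - z * (r * (r*w^2) * (Z*w*r))"
    by (simp add: algebra_simps power2_eq_square power3_eq_cube)
  then show ?thesis
    unfolding sum pairs product by simp
qed

theorem lemma2p7:
  fixes a \<theta> :: real
  assumes "0 < \<theta>" and "\<theta> < pi"
    and "a > 1/4 \<Longrightarrow> \<theta> \<noteq> arccos (- 1 / (2 * sqrt a))"
    and "1 - 4*a*(cos \<theta>)^2 \<noteq> 0"
    and "(complex_of_real (2 * cos \<theta>) + zeta a \<theta>) * (1 + 2 * zeta a \<theta> * complex_of_real (cos \<theta>)) \<noteq> 0"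
    and "zeta a \<theta> * exp (3 * \<i> * complex_of_real \<theta>) \<noteq> 0"
  defines "t0 \<equiv> - (exp (2 * \<i> * complex_of_real \<theta>) + zeta a \<theta> * exp (\<i> * complex_of_real \<theta>)
                   + zeta a \<theta> * exp (3 * \<i> * complex_of_real \<theta>))
                 / (zeta a \<theta> * exp (3 * \<i> * complex_of_real \<theta>))"
  shows "\<forall>t::complex. 1 + t + complex_of_real a * t^2 + zfun a \<theta> * t^3
           = zfun a \<theta> * (t - t0) * (t - t0 * exp (2 * \<i> * complex_of_real \<theta>))
               * (t - zeta a \<theta> * exp (\<i> * complex_of_real \<theta>) * t0)"
proof
  fix t :: complex
  define w where "w = exp (\<i> * complex_of_real \<theta>)"
  define c where "c = complex_of_real (cos \<theta>)"
  define Z where "Z = zeta a \<theta>"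
  have w: "w \<noteq> 0" and Z: "Z \<noteq> 0"
    using assms(6) unfolding w_def Z_def by simp_all
  have "Z + 2*c \<noteq> 0"
    using assms(5) unfolding Z_def c_def by (simp add: ac_simps)
  have w2: "exp (2 * \<i> * complex_of_real \<theta>) = w^2"
    unfolding w_def by (metis exp_of_nat_mult of_nat_numeral mult.assoc)
  have t0: "t0 = - ((1 + 2*c*Z) / (Z*w))"
    unfolding t0_def first_root_eq w_def c_def Z_def ..
  have circle: "w^2 + 1 = 2*c*w"
    unfolding w_def c_def by (rule exp_ii_squared_plus_one)
  have quadratic: "complex_of_real a * (1 + 2*c*Z)^2 = Z * (Z + 2*c)"
    unfolding Z_def c_def by (rule zeta_quadratic_relation[OF assms(4)])
  have leading: "zfun a \<theta> * (1 + 2*c*Z) * (Z + 2*c) = complex_of_real a * Z"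
    unfolding Z_def c_def by (rule zfun_mult_denominators[OF assms(5)])
  show "1 + t + complex_of_real a * t^2 + zfun a \<theta> * t^3
          = zfun a \<theta> * (t - t0) * (t - t0 * exp (2 * \<i> * complex_of_real \<theta>))
              * (t - zeta a \<theta> * exp (\<i> * complex_of_real \<theta>) * t0)"
    using cubic_factorization[OF w Z \<open>Z + 2*c \<noteq> 0\<close> circle quadratic leading, of t]
    unfolding t0 w2 by (simp add: w_def Z_def)
qed

end
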